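(* Let $m\ge1$ and $r,s\ge0$ with $r+s\ge1$. Then $H_m\oplus A(r\mid s)$ is capable if and only if $m=1$.
   Context: All algebras are over a field $\mathbb{F}$ of characteristic $\neq 2,3$. $A(r\mid s)$ is the abelian Lie superalgebra of dimension $(r\mid s)$. $H_m$ is the Lie superalgebra with even basis $x_1,\dots,x_m$, odd basis $y_1,\dots,y_m,z$, and nonzero brackets $[x_j,y_j]=z$ ($1\le j\le m$). A Lie superalgebra $L$ is capable if $L\cong H/Z(H)$ for some Lie superalgebra $H$. *)

theory Defs
  imports Main
begin

record ('f, 'v) lsa =
  carrier :: "'v set"
  vadd :: "'v \<Rightarrow> 'v \<Rightarrow> 'v"
  vzero :: 'v
  smul :: "'f \<Rightarrow> 'v \<Rightarrow> 'v"
  brk :: "'v \<Rightarrow> 'v \<Rightarrow> 'v"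
  part0 :: "'v set"
  part1 :: "'v set"

definition part :: "('f, 'v) lsa \<Rightarrow> nat \<Rightarrow> 'v set" where
  "part L i = (if i = 0 then part0 L else part1 L)"

definition vector_space_on :: "('f::field, 'v) lsa \<Rightarrow> bool" where
  "vector_space_on L \<longleftrightarrow>
     vzero L \<in> carrier L \<and>
     (\<forall>x\<in>carrier L. \<forall>y\<in>carrier L. vadd L x y \<in> carrier L) \<and>
     (\<forall>a. \<forall>x\<in>carrier L. smul L a x \<in> carrier L) \<and>
     (\<forall>x\<in>carrier L. \<forall>y\<in>carrier L. \<forall>z\<in>carrier L.
        vadd L (vadd L x y) z = vadd L x (vadd L y z)) \<and>
     (\<forall>x\<in>carrier L. \<forall>y\<in>carrier L. vadd L x y = vadd L y x) \<and>
     (\<forall>x\<in>carrier L. vadd L (vzero L) x = x) \<and>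
     (\<forall>x\<in>carrier L. \<exists>y\<in>carrier L. vadd L x y = vzero L) \<and>
     (\<forall>a. \<forall>x\<in>carrier L. \<forall>y\<in>carrier L.
        smul L a (vadd L x y) = vadd L (smul L a x) (smul L a y)) \<and>
     (\<forall>a b. \<forall>x\<in>carrier L. smul L (a + b) x = vadd L (smul L a x) (smul L b x)) \<and>
     (\<forall>a b. \<forall>x\<in>carrier L. smul L (a * b) x = smul L a (smul L b x)) \<and>
     (\<forall>x\<in>carrier L. smul L 1 x = x)"

definition subspace_of :: "('f::field, 'v) lsa \<Rightarrow> 'v set \<Rightarrow> bool" where
  "subspace_of L S \<longleftrightarrow> S \<subseteq> carrier L \<and> vzero L \<in> S \<and>
     (\<forall>x\<in>S. \<forall>y\<in>S. vadd L x y \<in> S) \<and> (\<forall>a. \<forall>x\<in>S. smul L a x \<in> S)"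

definition lsa :: "('f::field, 'v) lsa \<Rightarrow> bool" where
  "lsa L \<longleftrightarrow>
     vector_space_on L \<and>
     subspace_of L (part0 L) \<and> subspace_of L (part1 L) \<and>
     part0 L \<inter> part1 L = {vzero L} \<and>
     (\<forall>x\<in>carrier L. \<exists>a\<in>part0 L. \<exists>b\<in>part1 L. x = vadd L a b) \<and>
     (\<forall>x\<in>carrier L. \<forall>y\<in>carrier L. brk L x y \<in> carrier L) \<and>
     (\<forall>x\<in>carrier L. \<forall>y\<in>carrier L. \<forall>z\<in>carrier L.
        brk L (vadd L x y) z = vadd L (brk L x z) (brk L y z) \<and>
        brk L x (vadd L y z) = vadd L (brk L x y) (brk L x z)) \<and>
     (\<forall>a. \<forall>x\<in>carrier L. \<forall>y\<in>carrier L.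
        brk L (smul L a x) y = smul L a (brk L x y) \<and>
        brk L x (smul L a y) = smul L a (brk L x y)) \<and>
     (\<forall>i\<in>{0,1}. \<forall>j\<in>{0,1}. \<forall>x\<in>part L i. \<forall>y\<in>part L j.
        brk L x y \<in> part L ((i + j) mod 2)) \<and>
     (\<forall>i\<in>{0,1}. \<forall>j\<in>{0,1}. \<forall>x\<in>part L i. \<forall>y\<in>part L j.
        brk L x y = smul L (- ((-1) ^ (i * j))) (brk L y x)) \<and>
     (\<forall>i\<in>{0,1}. \<forall>j\<in>{0,1}. \<forall>k\<in>{0,1}.
        \<forall>x\<in>part L i. \<forall>y\<in>part L j. \<forall>z\<in>part L k.
        vadd L (vadd L (smul L ((-1) ^ (i * k)) (brk L x (brk L y z)))
                       (smul L ((-1) ^ (j * i)) (brk L y (brk L z x))))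
               (smul L ((-1) ^ (k * j)) (brk L z (brk L x y))) = vzero L)"

definition lsa_iso :: "('f::field, 'v) lsa \<Rightarrow> ('f, 'w) lsa \<Rightarrow> bool" where
  "lsa_iso L M \<longleftrightarrow> (\<exists>f. bij_betw f (carrier L) (carrier M) \<and>
     (\<forall>x\<in>carrier L. \<forall>y\<in>carrier L. f (vadd L x y) = vadd M (f x) (f y)) \<and>
     (\<forall>a. \<forall>x\<in>carrier L. f (smul L a x) = smul M a (f x)) \<and>
     (\<forall>x\<in>carrier L. \<forall>y\<in>carrier L. f (brk L x y) = brk M (f x) (f y)) \<and>
     f ` part0 L = part0 M \<and> f ` part1 L = part1 M)"

definition center :: "('f, 'v) lsa \<Rightarrow> 'v set" where
  "center H = {z\<in>carrier H. \<forall>x\<in>carrier H. brk H z x = vzero H}"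

definition coset :: "('f, 'v) lsa \<Rightarrow> 'v set \<Rightarrow> 'v \<Rightarrow> 'v set" where
  "coset H I x = {vadd H x i | i. i \<in> I}"

definition rep :: "'v set \<Rightarrow> 'v" where
  "rep A = (SOME x. x \<in> A)"

definition quot :: "('f, 'v) lsa \<Rightarrow> 'v set \<Rightarrow> ('f, 'v set) lsa" where
  "quot H I = \<lparr> carrier = coset H I ` carrier H,
     vadd = (\<lambda>A B. coset H I (vadd H (rep A) (rep B))),
     vzero = coset H I (vzero H),
     smul = (\<lambda>a A. coset H I (smul H a (rep A))),
     brk = (\<lambda>A B. coset H I (brk H (rep A) (rep B))),
     part0 = coset H I ` part0 H,
     part1 = coset H I ` part1 H \<rparr>"

definition dsum :: "('f, 'v) lsa \<Rightarrow> ('f, 'w) lsa \<Rightarrow> ('f, 'v \<times> 'w) lsa" where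
  "dsum L M = \<lparr> carrier = carrier L \<times> carrier M,
     vadd = (\<lambda>(x1, x2) (y1, y2). (vadd L x1 y1, vadd M x2 y2)),
     vzero = (vzero L, vzero M),
     smul = (\<lambda>a (x1, x2). (smul L a x1, smul M a x2)),
     brk = (\<lambda>(x1, x2) (y1, y2). (brk L x1 y1, brk M x2 y2)),
     part0 = part0 L \<times> part0 M,
     part1 = part1 L \<times> part1 M \<rparr>"

text \<open>H_m: coordinates u : nat => 'f supported on {0..2m}; index j-1 is x_j (even),
index m+j-1 is y_j (odd), index 2m is z (odd); only nonzero brackets [x_j,y_j] = z
(and [y_j,x_j] = -z by super skew-symmetry).\<close>

definition heis :: "nat \<Rightarrow> ('f::field, nat \<Rightarrow> 'f) lsa" where
  "heis m = \<lparr> carrier = {u. \<forall>i\<ge>2*m+1. u i = 0},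
     vadd = (\<lambda>u v i. u i + v i),
     vzero = (\<lambda>i. 0),
     smul = (\<lambda>a u i. a * u i),
     brk = (\<lambda>u v i. if i = 2*m then (\<Sum>j<m. u j * v (m+j) - u (m+j) * v j) else 0),
     part0 = {u. \<forall>i\<ge>m. u i = 0},
     part1 = {u. (\<forall>i<m. u i = 0) \<and> (\<forall>i\<ge>2*m+1. u i = 0)} \<rparr>"

text \<open>A(r|s): abelian, coordinates supported on {0..<r+s}; first r even, next s odd.\<close>

definition abel :: "nat \<Rightarrow> nat \<Rightarrow> ('f::field, nat \<Rightarrow> 'f) lsa" where
  "abel r s = \<lparr> carrier = {u. \<forall>i\<ge>r+s. u i = 0},
     vadd = (\<lambda>u v i. u i + v i),
     vzero = (\<lambda>i. 0),
     smul = (\<lambda>a u i. a * u i),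
     brk = (\<lambda>u v i. 0),
     part0 = {u. \<forall>i\<ge>r. u i = 0},
     part1 = {u. (\<forall>i<r. u i = 0) \<and> (\<forall>i\<ge>r+s. u i = 0)} \<rparr>"

definition capable_via :: "('f::field, 'v) lsa \<Rightarrow> ('f, 'h) lsa \<Rightarrow> bool" where
  "capable_via L H \<longleftrightarrow> lsa H \<and> lsa_iso L (quot H (center H))"

end

theory Submission
  imports Defs
begin

text \<open>Suppose m \<ge> 2 and L = H_m \<oplus> A(r|s) is H/Z(H). Lift x_1, y_1, x_2, y_2 to H. Their cross
  brackets vanish in L, so they lift to central elements of H, and the super Jacobi identity
  shows that the lift of z = [x_1,y_1] = [x_2,y_2] commutes with x_1 and y_1. Since ad y_1 and
  the right multiplication by x_1 map L into the line of z, a second use of Jacobi shows that the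
  lift of z is central, i.e. z = 0 in L, a contradiction. For m = 1, adjoining to H_1 \<oplus> A(r|s)
  central elements playing the role of [x,z] and [x,a_i] gives an explicit H with
  H/Z(H) = H_1 \<oplus> A(r|s).\<close>

section \<open>Vector spaces and Lie superalgebras\<close>

lemma vector_space_onD:
  assumes "vector_space_on L"
  shows vs_zero_closed: "vzero L \<in> carrier L"
    and vs_add_closed: "x \<in> carrier L \<Longrightarrow> y \<in> carrier L \<Longrightarrow> vadd L x y \<in> carrier L"
    and vs_smul_closed: "x \<in> carrier L \<Longrightarrow> smul L a x \<in> carrier L"
    and vs_add_assoc: "x \<in> carrier L \<Longrightarrow> y \<in> carrier L \<Longrightarrow> z \<in> carrier L \<Longrightarrow>
      vadd L (vadd L x y) z = vadd L x (vadd L y z)"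
    and vs_add_commute: "x \<in> carrier L \<Longrightarrow> y \<in> carrier L \<Longrightarrow> vadd L x y = vadd L y x"
    and vs_zero_add: "x \<in> carrier L \<Longrightarrow> vadd L (vzero L) x = x"
    and vs_add_inverse: "x \<in> carrier L \<Longrightarrow> \<exists>y\<in>carrier L. vadd L x y = vzero L"
    and vs_smul_add_right: "x \<in> carrier L \<Longrightarrow> y \<in> carrier L \<Longrightarrow>
      smul L a (vadd L x y) = vadd L (smul L a x) (smul L a y)"
    and vs_smul_add_left: "x \<in> carrier L \<Longrightarrow> smul L (a + b) x = vadd L (smul L a x) (smul L b x)"
    and vs_smul_smul: "x \<in> carrier L \<Longrightarrow> smul L (a * b) x = smul L a (smul L b x)"
    and vs_smul_one: "x \<in> carrier L \<Longrightarrow> smul L 1 x = x"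
  using assms unfolding vector_space_on_def by - (elim conjE, meson)+

context
  fixes L :: "('f::field, 'v) lsa"
  assumes V: "vector_space_on L"
begin

lemma vs_add_zero: "x \<in> carrier L \<Longrightarrow> vadd L x (vzero L) = x"
  by (metis V vs_add_commute vs_zero_add vs_zero_closed)

lemma vs_add_left_cancel:
  assumes "a \<in> carrier L" "b \<in> carrier L" "c \<in> carrier L" and "vadd L a b = vadd L a c"
  shows "b = c"
proof -
  obtain y where y: "y \<in> carrier L" "vadd L a y = vzero L"
    using vs_add_inverse[OF V \<open>a \<in> carrier L\<close>] by blast
  have ya: "vadd L y a = vzero L"
    using y assms(1) vs_add_commute[OF V] by metis
  have "b = vadd L (vadd L y a) b" using ya vs_zero_add[OF V] assms by simp
  also have "\<dots> = vadd L (vadd L y a) c" using vs_add_assoc[OF V] y assms by simp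
  also have "\<dots> = c" using ya vs_zero_add[OF V] assms by simp
  finally show ?thesis .
qed

lemma vs_add_idem_zero: "x \<in> carrier L \<Longrightarrow> vadd L x x = x \<Longrightarrow> x = vzero L"
  using vs_add_left_cancel[of x x "vzero L"] vs_add_zero vs_zero_closed[OF V] by simp

lemma vs_smul_zero_left:
  assumes "x \<in> carrier L"
  shows "smul L 0 x = vzero L"
proof (rule vs_add_idem_zero)
  show "smul L 0 x \<in> carrier L" using vs_smul_closed[OF V assms] .
  show "vadd L (smul L 0 x) (smul L 0 x) = smul L 0 x"
    using vs_smul_add_left[OF V assms, of 0 0] by simp
qed

lemma vs_smul_zero_right: "smul L a (vzero L) = vzero L"
proof (rule vs_add_idem_zero)
  show "smul L a (vzero L) \<in> carrier L" using vs_smul_closed[OF V vs_zero_closed[OF V]] .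
  show "vadd L (smul L a (vzero L)) (smul L a (vzero L)) = smul L a (vzero L)"
    using vs_smul_add_right[OF V vs_zero_closed[OF V] vs_zero_closed[OF V], of a]
      vs_zero_add[OF V vs_zero_closed[OF V]] by simp
qed

lemma vs_add_neg: "x \<in> carrier L \<Longrightarrow> vadd L x (smul L (-1) x) = vzero L"
  using vs_smul_add_left[OF V, of x 1 "-1"] vs_smul_one[OF V] vs_smul_zero_left by simp

lemma vs_smul_eq_zero:
  assumes "x \<in> carrier L" "a \<noteq> 0" "smul L a x = vzero L"
  shows "x = vzero L"
proof -
  have "x = smul L (inverse a) (smul L a x)"
    using assms vs_smul_one[OF V] vs_smul_smul[OF V, of x "inverse a" a] by simp
  thus ?thesis using assms(3) vs_smul_zero_right by simp
qed

lemma vs_add_add_swap: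
  assumes "x \<in> carrier L" "y \<in> carrier L" "u \<in> carrier L" "v \<in> carrier L"
  shows "vadd L (vadd L x u) (vadd L y v) = vadd L (vadd L x y) (vadd L u v)"
proof -
  have "vadd L (vadd L x u) (vadd L y v) = vadd L x (vadd L (vadd L u y) v)"
    using assms by (simp add: V vs_add_assoc vs_add_closed)
  also have "\<dots> = vadd L x (vadd L (vadd L y u) v)"
    using assms by (simp add: V vs_add_commute)
  also have "\<dots> = vadd L (vadd L x y) (vadd L u v)"
    using assms by (simp add: V vs_add_assoc vs_add_closed)
  finally show ?thesis .
qed

end

lemma lsaD:
  assumes "lsa L"
  shows lsa_vector_space: "vector_space_on L"
    and lsa_subspace_part0: "subspace_of L (part0 L)"
    and lsa_subspace_part1: "subspace_of L (part1 L)"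
    and lsa_parts_inter: "part0 L \<inter> part1 L = {vzero L}"
    and lsa_decompose: "x \<in> carrier L \<Longrightarrow> \<exists>a\<in>part0 L. \<exists>b\<in>part1 L. x = vadd L a b"
    and lsa_brk_closed: "x \<in> carrier L \<Longrightarrow> y \<in> carrier L \<Longrightarrow> brk L x y \<in> carrier L"
    and lsa_brk_add_left: "x \<in> carrier L \<Longrightarrow> y \<in> carrier L \<Longrightarrow> z \<in> carrier L \<Longrightarrow>
      brk L (vadd L x y) z = vadd L (brk L x z) (brk L y z)"
    and lsa_brk_add_right: "x \<in> carrier L \<Longrightarrow> y \<in> carrier L \<Longrightarrow> z \<in> carrier L \<Longrightarrow>
      brk L x (vadd L y z) = vadd L (brk L x y) (brk L x z)"
    and lsa_brk_smul_left: "x \<in> carrier L \<Longrightarrow> y \<in> carrier L \<Longrightarrow>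
      brk L (smul L a x) y = smul L a (brk L x y)"
    and lsa_brk_smul_right: "x \<in> carrier L \<Longrightarrow> y \<in> carrier L \<Longrightarrow>
      brk L x (smul L a y) = smul L a (brk L x y)"
    and lsa_brk_part: "i \<in> {0,1} \<Longrightarrow> j \<in> {0,1} \<Longrightarrow> x \<in> part L i \<Longrightarrow> y \<in> part L j \<Longrightarrow>
      brk L x y \<in> part L ((i + j) mod 2)"
    and lsa_brk_skew: "i \<in> {0,1} \<Longrightarrow> j \<in> {0,1} \<Longrightarrow> x \<in> part L i \<Longrightarrow> y \<in> part L j \<Longrightarrow>
      brk L x y = smul L (- ((-1) ^ (i * j))) (brk L y x)"
    and lsa_jacobi: "i \<in> {0,1} \<Longrightarrow> j \<in> {0,1} \<Longrightarrow> k \<in> {0,1} \<Longrightarrow>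
      x \<in> part L i \<Longrightarrow> y \<in> part L j \<Longrightarrow> z \<in> part L k \<Longrightarrow>
      vadd L (vadd L (smul L ((-1) ^ (i * k)) (brk L x (brk L y z)))
                     (smul L ((-1) ^ (j * i)) (brk L y (brk L z x))))
             (smul L ((-1) ^ (k * j)) (brk L z (brk L x y))) = vzero L"
  using assms unfolding lsa_def by - (elim conjE, meson)+

lemma part_simps [simp]: "part L 0 = part0 L" "part L (Suc 0) = part1 L"
  by (simp_all add: part_def)

context
  fixes H :: "('f::field, 'v) lsa"
  assumes H: "lsa H"
begin

lemma lsa_part0_carrier: "x \<in> part0 H \<Longrightarrow> x \<in> carrier H"
  using lsa_subspace_part0[OF H] by (auto simp: subspace_of_def)

lemma lsa_part1_carrier: "x \<in> part1 H \<Longrightarrow> x \<in> carrier H"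
  using lsa_subspace_part1[OF H] by (auto simp: subspace_of_def)

lemma lsa_brk_zero_left:
  assumes "x \<in> carrier H"
  shows "brk H (vzero H) x = vzero H"
proof (rule vs_add_idem_zero[OF lsa_vector_space[OF H]])
  note V = lsa_vector_space[OF H]
  show "brk H (vzero H) x \<in> carrier H" using lsa_brk_closed[OF H vs_zero_closed[OF V] assms] .
  show "vadd H (brk H (vzero H) x) (brk H (vzero H) x) = brk H (vzero H) x"
    using lsa_brk_add_left[OF H vs_zero_closed[OF V] vs_zero_closed[OF V] assms]
      vs_zero_add[OF V vs_zero_closed[OF V]] by simp
qed

end

lemma lsa_homogeneous_sum_eq_zero:
  assumes H: "lsa H" and a: "a \<in> part0 H" and b: "b \<in> part1 H"
    and ab: "vadd H a b = vzero H"
  shows "a = vzero H" and "b = vzero H"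
proof -
  note V = lsa_vector_space[OF H]
  have ac: "a \<in> carrier H" and bc: "b \<in> carrier H"
    using a b lsa_part0_carrier[OF H] lsa_part1_carrier[OF H] by auto
  let ?nb = "smul H (-1) b"
  have "a = vadd H a (vadd H b ?nb)"
    using vs_add_neg[OF V bc] vs_add_zero[OF V ac] by simp
  also have "\<dots> = ?nb"
    using ab vs_add_assoc[OF V ac bc vs_smul_closed[OF V bc]] vs_zero_add[OF V vs_smul_closed[OF V bc]]
    by simp
  finally have "a \<in> part1 H"
    using lsa_subspace_part1[OF H] b by (simp add: subspace_of_def)
  thus "a = vzero H" using a lsa_parts_inter[OF H] by blast
  thus "b = vzero H" using ab vs_zero_add[OF V bc] by simp
qed

section \<open>The center and the quotient by it\<close>

lemma center_carrier: "c \<in> center H \<Longrightarrow> c \<in> carrier H"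
  and center_brk_left: "c \<in> center H \<Longrightarrow> x \<in> carrier H \<Longrightarrow> brk H c x = vzero H"
  by (simp_all add: center_def)

context
  fixes H :: "('f::field, 'v) lsa"
  assumes H: "lsa H"
begin

lemma center_zero: "vzero H \<in> center H"
  using lsa_brk_zero_left[OF H] vs_zero_closed[OF lsa_vector_space[OF H]] by (simp add: center_def)

lemma center_add:
  assumes "c \<in> center H" "d \<in> center H"
  shows "vadd H c d \<in> center H"
  using assms lsa_brk_add_left[OF H] center_carrier center_brk_left
    vs_add_closed[OF lsa_vector_space[OF H]] vs_zero_add[OF lsa_vector_space[OF H]]
    vs_zero_closed[OF lsa_vector_space[OF H]]
  by (simp add: center_def)

lemma center_smul: "c \<in> center H \<Longrightarrow> smul H a c \<in> center H"
  using lsa_brk_smul_left[OF H] center_carrier center_brk_left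
    vs_smul_closed[OF lsa_vector_space[OF H]] vs_smul_zero_right[OF lsa_vector_space[OF H]]
  by (simp add: center_def)

text \<open>By the grading, [c0,w] and [c1,w] lie in different homogeneous parts, and they add up
  to [c,w] = 0.\<close>

lemma center_component_brk_homogeneous:
  assumes c: "c \<in> center H" and c0: "c0 \<in> part0 H" and c1: "c1 \<in> part1 H"
    and cd: "c = vadd H c0 c1" and k: "k \<in> {0,1}" and w: "w \<in> part H k"
  shows "brk H c0 w = vzero H" and "brk H c1 w = vzero H"
proof -
  have wc: "w \<in> carrier H" using w k lsa_part0_carrier[OF H] lsa_part1_carrier[OF H] by auto
  have sum: "vadd H (brk H c0 w) (brk H c1 w) = vzero H"
    using lsa_brk_add_left[OF H lsa_part0_carrier[OF H c0] lsa_part1_carrier[OF H c1] wc]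
      cd center_brk_left[OF c wc] by simp
  have g0: "brk H c0 w \<in> part H k" using lsa_brk_part[OF H, of 0 k c0 w] c0 w k by auto
  have g1: "brk H c1 w \<in> part H ((1 + k) mod 2)" using lsa_brk_part[OF H, of 1 k c1 w] c1 w k by auto
  have "brk H c0 w = vzero H \<and> brk H c1 w = vzero H"
  proof (cases "k = 0")
    case True
    thus ?thesis using lsa_homogeneous_sum_eq_zero[OF H _ _ sum] g0 g1 by simp
  next
    case False
    hence "k = 1" using k by auto
    thus ?thesis
      using lsa_homogeneous_sum_eq_zero[OF H _ _ sum[unfolded vs_add_commute[OF lsa_vector_space[OF H]
            lsa_brk_closed[OF H lsa_part0_carrier[OF H c0] wc]
            lsa_brk_closed[OF H lsa_part1_carrier[OF H c1] wc]]]] g0 g1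
      by simp
  qed
  thus "brk H c0 w = vzero H" and "brk H c1 w = vzero H" by auto
qed

lemma center_brk_right:
  assumes c: "c \<in> center H" and w: "w \<in> carrier H"
  shows "brk H w c = vzero H"
proof -
  note V = lsa_vector_space[OF H]
  obtain c0 c1 where c0: "c0 \<in> part0 H" and c1: "c1 \<in> part1 H" and cd: "c = vadd H c0 c1"
    using lsa_decompose[OF H center_carrier[OF c]] by blast
  obtain w0 w1 where w0: "w0 \<in> part0 H" and w1: "w1 \<in> part1 H" and wd: "w = vadd H w0 w1"
    using lsa_decompose[OF H w] by blast
  have vanish: "brk H u ci = vzero H"
    if "u \<in> part H k" "k \<in> {0,1}" "ci \<in> part H l" "l \<in> {0,1}" "ci = c0 \<or> ci = c1" for u ci k l
  proof -
    have "brk H ci u = vzero H"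
      using center_component_brk_homogeneous[OF c c0 c1 cd, of k u] that by auto
    thus ?thesis using lsa_brk_skew[OF H, of k l u ci] that vs_smul_zero_right[OF V] by simp
  qed
  have "brk H w0 c0 = vzero H" "brk H w0 c1 = vzero H" "brk H w1 c0 = vzero H" "brk H w1 c1 = vzero H"
    using vanish[of w0 0 c0 0] vanish[of w0 0 c1 1] vanish[of w1 1 c0 0] vanish[of w1 1 c1 1]
      w0 w1 c0 c1 by simp_all
  moreover note lsa_part0_carrier[OF H c0] lsa_part1_carrier[OF H c1]
    lsa_part0_carrier[OF H w0] lsa_part1_carrier[OF H w1]
  ultimately show ?thesis
    unfolding wd cd
    using lsa_brk_add_left[OF H _ _ vs_add_closed[OF V]] lsa_brk_add_right[OF H]
      vs_zero_add[OF V vs_zero_closed[OF V]] by simp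
qed

end

abbreviation center_coset :: "('f, 'v) lsa \<Rightarrow> 'v \<Rightarrow> 'v set" where
  "center_coset H \<equiv> coset H (center H)"

context
  fixes H :: "('f::field, 'v) lsa"
  assumes H: "lsa H"
begin

lemma center_coset_self: "x \<in> carrier H \<Longrightarrow> x \<in> center_coset H x"
  using center_zero[OF H] vs_add_zero[OF lsa_vector_space[OF H]] unfolding coset_def by force

lemma center_cosetE:
  assumes "u \<in> center_coset H x"
  obtains c where "c \<in> center H" "u = vadd H x c"
  using assms unfolding coset_def by blast

lemma rep_center_coset:
  assumes "x \<in> carrier H"
  obtains c where "c \<in> center H" "rep (center_coset H x) = vadd H x c"
proof -
  have "rep (center_coset H x) \<in> center_coset H x"
    unfolding rep_def using center_coset_self[OF assms] by (rule someI)
  thus ?thesis using that center_cosetE by blast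
qed

lemma center_coset_add_center:
  assumes x: "x \<in> carrier H" and c: "c \<in> center H"
  shows "center_coset H (vadd H x c) = center_coset H x"
proof (rule set_eqI, rule iffI)
  note V = lsa_vector_space[OF H]
  have cc: "c \<in> carrier H" using center_carrier[OF c] .
  fix u
  assume "u \<in> center_coset H (vadd H x c)"
  then obtain d where d: "d \<in> center H" and u: "u = vadd H (vadd H x c) d"
    by (rule center_cosetE)
  have "u = vadd H x (vadd H c d)" using u vs_add_assoc[OF V x cc center_carrier[OF d]] by simp
  with center_add[OF H c d] show "u \<in> center_coset H x" unfolding coset_def by blast
next
  note V = lsa_vector_space[OF H]
  have cc: "c \<in> carrier H" using center_carrier[OF c] .
  fix u
  assume "u \<in> center_coset H x"
  then obtain d where d: "d \<in> center H" and u: "u = vadd H x d"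
    by (rule center_cosetE)
  have dc: "d \<in> carrier H" using center_carrier[OF d] .
  let ?nc = "smul H (-1) c"
  have nc: "?nc \<in> carrier H" using vs_smul_closed[OF V cc] .
  have "vadd H (vadd H x c) (vadd H ?nc d) = vadd H x (vadd H (vadd H c ?nc) d)"
    using vs_add_assoc[OF V] x cc nc dc vs_add_closed[OF V] by simp
  also have "\<dots> = u" using vs_add_neg[OF V cc] vs_zero_add[OF V dc] u by simp
  finally show "u \<in> center_coset H (vadd H x c)"
    using center_add[OF H center_smul[OF H c] d] unfolding coset_def by blast
qed

lemma center_coset_eqD:
  assumes "x \<in> carrier H" and "center_coset H x = center_coset H y"
  obtains c where "c \<in> center H" "x = vadd H y c"
  using center_coset_self[OF assms(1)] assms(2) center_cosetE by metis

lemma center_coset_zero: "center_coset H (vzero H) = center H"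
  using vs_zero_add[OF lsa_vector_space[OF H]] center_carrier unfolding coset_def by force

lemma center_coset_eq_center_iff:
  assumes "x \<in> carrier H"
  shows "center_coset H x = center H \<longleftrightarrow> x \<in> center H"
proof
  show "center_coset H x = center H \<Longrightarrow> x \<in> center H" using center_coset_self[OF assms] by simp
  assume "x \<in> center H"
  thus "center_coset H x = center H"
    using center_coset_add_center[OF vs_zero_closed[OF lsa_vector_space[OF H]]]
      vs_zero_add[OF lsa_vector_space[OF H] assms] center_coset_zero by metis
qed

text \<open>The quotient operations act on representatives chosen by rep; modulo the center the
  choice does not matter.\<close>

lemma quot_center_add:
  assumes a: "a \<in> carrier H" and b: "b \<in> carrier H"
  shows "vadd (quot H (center H)) (center_coset H a) (center_coset H b)
    = center_coset H (vadd H a b)"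
proof -
  note V = lsa_vector_space[OF H]
  obtain c d where c: "c \<in> center H" "rep (center_coset H a) = vadd H a c"
    and d: "d \<in> center H" "rep (center_coset H b) = vadd H b d"
    using rep_center_coset[OF a] rep_center_coset[OF b] by metis
  have "vadd H (vadd H a c) (vadd H b d) = vadd H (vadd H a b) (vadd H c d)"
    using vs_add_add_swap[OF V a b center_carrier[OF c(1)] center_carrier[OF d(1)]] .
  thus ?thesis
    using c d center_coset_add_center[OF vs_add_closed[OF V a b] center_add[OF H c(1) d(1)]]
    by (simp add: quot_def)
qed

lemma quot_center_smul:
  assumes a: "a \<in> carrier H"
  shows "smul (quot H (center H)) t (center_coset H a) = center_coset H (smul H t a)"
proof -
  note V = lsa_vector_space[OF H]
  obtain c where c: "c \<in> center H" "rep (center_coset H a) = vadd H a c"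
    using rep_center_coset[OF a] by metis
  have "smul H t (vadd H a c) = vadd H (smul H t a) (smul H t c)"
    using vs_smul_add_right[OF V a center_carrier[OF c(1)]] .
  thus ?thesis
    using c center_coset_add_center[OF vs_smul_closed[OF V a] center_smul[OF H c(1)]]
    by (simp add: quot_def)
qed

lemma quot_center_brk:
  assumes a: "a \<in> carrier H" and b: "b \<in> carrier H"
  shows "brk (quot H (center H)) (center_coset H a) (center_coset H b)
    = center_coset H (brk H a b)"
proof -
  note V = lsa_vector_space[OF H]
  obtain c d where c: "c \<in> center H" "rep (center_coset H a) = vadd H a c"
    and d: "d \<in> center H" "rep (center_coset H b) = vadd H b d"
    using rep_center_coset[OF a] rep_center_coset[OF b] by metis
  have bd: "vadd H b d \<in> carrier H" using vs_add_closed[OF V b center_carrier[OF d(1)]] .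
  have "brk H (vadd H a c) (vadd H b d) = vadd H (brk H a (vadd H b d)) (brk H c (vadd H b d))"
    using lsa_brk_add_left[OF H a center_carrier[OF c(1)] bd] .
  also have "\<dots> = vadd H (vadd H (brk H a b) (brk H a d)) (vzero H)"
    using lsa_brk_add_right[OF H a b center_carrier[OF d(1)]] center_brk_left[OF c(1) bd] by simp
  also have "\<dots> = brk H a b"
    using center_brk_right[OF H d(1) a] vs_add_zero[OF V] lsa_brk_closed[OF H a b] by simp
  finally show ?thesis using c d by (simp add: quot_def)
qed

end

section \<open>An obstruction to capability\<close>

text \<open>Super Jacobi for (x1, x2, y2) and (y1, x2, y2): the other two terms are brackets with
  central elements.\<close>

lemma lsa_brk_brk_vanishes:
  assumes H: "lsa H" and x1: "x1 \<in> part0 H" and y1: "y1 \<in> part1 H"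
    and x2: "x2 \<in> part0 H" and y2: "y2 \<in> part1 H"
    and c: "c \<in> center H" and eq: "brk H x1 y1 = vadd H (brk H x2 y2) c"
    and "brk H y2 x1 \<in> center H" "brk H x1 x2 \<in> center H"
    and "brk H y2 y1 \<in> center H" "brk H y1 x2 \<in> center H"
  shows "brk H x1 (brk H x1 y1) = vzero H" and "brk H y1 (brk H x1 y1) = vzero H"
proof -
  note V = lsa_vector_space[OF H]
  have x1c: "x1 \<in> carrier H" and y1c: "y1 \<in> carrier H"
    and x2c: "x2 \<in> carrier H" and y2c: "y2 \<in> carrier H"
    using x1 y1 x2 y2 lsa_part0_carrier[OF H] lsa_part1_carrier[OF H] by auto
  have b22: "brk H x2 y2 \<in> carrier H" using lsa_brk_closed[OF H x2c y2c] .
  have shift: "brk H u (brk H x1 y1) = brk H u (brk H x2 y2)" if "u \<in> carrier H" for u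
    using eq lsa_brk_add_right[OF H that b22 center_carrier[OF c]] center_brk_right[OF H c that]
      vs_add_zero[OF V lsa_brk_closed[OF H that b22]] by simp
  have "brk H x1 (brk H x2 y2) = vzero H"
  proof -
    have "vadd H (vadd H (smul H 1 (brk H x1 (brk H x2 y2))) (smul H 1 (brk H x2 (brk H y2 x1))))
        (smul H 1 (brk H y2 (brk H x1 x2))) = vzero H"
      using lsa_jacobi[OF H, of 0 0 1 x1 x2 y2] x1 x2 y2 by simp
    thus ?thesis
      using center_brk_right[OF H] assms(8,9) x2c y2c vs_smul_one[OF V] vs_add_zero[OF V]
        vs_zero_closed[OF V] lsa_brk_closed[OF H x1c b22] by simp
  qed
  thus "brk H x1 (brk H x1 y1) = vzero H" using shift[OF x1c] by simp
  have "smul H (-1) (brk H y1 (brk H x2 y2)) = vzero H"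
  proof -
    have "vadd H (vadd H (smul H (-1) (brk H y1 (brk H x2 y2))) (smul H 1 (brk H x2 (brk H y2 y1))))
        (smul H 1 (brk H y2 (brk H y1 x2))) = vzero H"
      using lsa_jacobi[OF H, of 1 0 1 y1 x2 y2] y1 x2 y2 by simp
    thus ?thesis
      using center_brk_right[OF H] assms(10,11) x2c y2c vs_smul_one[OF V] vs_add_zero[OF V]
        vs_zero_closed[OF V] vs_smul_closed[OF V lsa_brk_closed[OF H y1c b22]] by simp
  qed
  thus "brk H y1 (brk H x1 y1) = vzero H"
    using vs_smul_eq_zero[OF V lsa_brk_closed[OF H y1c b22], of "-1"] shift[OF y1c] by simp
qed

lemma lsa_brk_central_of_adjoint_range:
  assumes H: "lsa H" and x1: "x1 \<in> part0 H" and y1: "y1 \<in> part1 H"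
    and x1z: "brk H x1 (brk H x1 y1) = vzero H" and y1z: "brk H y1 (brk H x1 y1) = vzero H"
    and ad_y1: "\<And>w. w \<in> carrier H \<Longrightarrow>
      \<exists>a. \<exists>d\<in>center H. brk H y1 w = vadd H (smul H a (brk H x1 y1)) d"
    and ad_x1: "\<And>w. w \<in> carrier H \<Longrightarrow>
      \<exists>a. \<exists>d\<in>center H. brk H w x1 = vadd H (smul H a (brk H x1 y1)) d"
  shows "brk H x1 y1 \<in> center H"
proof -
  note V = lsa_vector_space[OF H]
  define z where "z = brk H x1 y1"
  have x1c: "x1 \<in> carrier H" and y1c: "y1 \<in> carrier H"
    using x1 y1 lsa_part0_carrier[OF H] lsa_part1_carrier[OF H] by auto
  have zc: "z \<in> carrier H" unfolding z_def using lsa_brk_closed[OF H x1c y1c] .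
  have kills: "brk H u (vadd H (smul H a z) d) = vzero H"
    if "u \<in> carrier H" "brk H u z = vzero H" "d \<in> center H" for u a d
    using that lsa_brk_add_right[OF H _ vs_smul_closed[OF V zc] center_carrier]
      lsa_brk_smul_right[OF H _ zc] center_brk_right[OF H] vs_smul_zero_right[OF V]
      vs_zero_add[OF V vs_zero_closed[OF V]] by simp
  have homogeneous: "brk H z w = vzero H" if w: "w \<in> part H k" and k: "k \<in> {0,1}" for w k
  proof -
    have wc: "w \<in> carrier H" using w k lsa_part0_carrier[OF H] lsa_part1_carrier[OF H] by auto
    have "brk H x1 (brk H y1 w) = vzero H" and "brk H y1 (brk H w x1) = vzero H"
      using ad_y1[OF wc] ad_x1[OF wc] kills x1c y1c x1z y1z unfolding z_def by metis+
    moreover have "vadd H (vadd H (smul H 1 (brk H x1 (brk H y1 w))) (smul H 1 (brk H y1 (brk H w x1))))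
        (smul H ((-1) ^ k) (brk H w z)) = vzero H"
      using lsa_jacobi[OF H, of 0 1 k x1 y1 w] x1 y1 w k unfolding z_def by simp
    ultimately have "smul H ((-1) ^ k) (brk H w z) = vzero H"
      using vs_smul_one[OF V] vs_zero_add[OF V] vs_zero_closed[OF V]
        vs_smul_closed[OF V lsa_brk_closed[OF H wc zc]] by simp
    hence "brk H w z = vzero H" using vs_smul_eq_zero[OF V lsa_brk_closed[OF H wc zc], of "(-1) ^ k"] by simp
    moreover have "z \<in> part H 1" using lsa_brk_part[OF H, of 0 1 x1 y1] x1 y1 unfolding z_def by simp
    ultimately show ?thesis using lsa_brk_skew[OF H _ k _ w, of 1 z] vs_smul_zero_right[OF V] by simp
  qed
  have "brk H z w = vzero H" if w: "w \<in> carrier H" for w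
  proof -
    obtain w0 w1 where "w0 \<in> part0 H" "w1 \<in> part1 H" "w = vadd H w0 w1"
      using lsa_decompose[OF H w] by blast
    thus ?thesis
      using lsa_brk_add_right[OF H zc lsa_part0_carrier[OF H] lsa_part1_carrier[OF H]]
        homogeneous[of w0 0] homogeneous[of w1 1] vs_zero_add[OF V vs_zero_closed[OF V]] by simp
  qed
  thus ?thesis using zc unfolding z_def center_def by blast
qed

locale center_quotient_iso =
  fixes L :: "('f::field, 'v) lsa" and H :: "('f, 'h) lsa" and f :: "'v \<Rightarrow> 'h set"
  assumes lsa_H: "lsa H"
    and vector_space_L: "vector_space_on L"
    and part0_subset: "part0 L \<subseteq> carrier L" and part1_subset: "part1 L \<subseteq> carrier L"
    and brk_closed: "\<And>x y. x \<in> carrier L \<Longrightarrow> y \<in> carrier L \<Longrightarrow> brk L x y \<in> carrier L"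
    and bij: "bij_betw f (carrier L) (carrier (quot H (center H)))"
    and f_smul: "\<And>a x. x \<in> carrier L \<Longrightarrow> f (smul L a x) = smul (quot H (center H)) a (f x)"
    and f_brk: "\<And>x y. x \<in> carrier L \<Longrightarrow> y \<in> carrier L \<Longrightarrow>
      f (brk L x y) = brk (quot H (center H)) (f x) (f y)"
    and f_part0: "f ` part0 L = part0 (quot H (center H))"
    and f_part1: "f ` part1 L = part1 (quot H (center H))"

lemma lsa_iso_quot_centerE:
  assumes "lsa H" "vector_space_on L" "part0 L \<subseteq> carrier L" "part1 L \<subseteq> carrier L"
    and "\<And>x y. x \<in> carrier L \<Longrightarrow> y \<in> carrier L \<Longrightarrow> brk L x y \<in> carrier L"
    and "lsa_iso L (quot H (center H))"
  obtains f where "center_quotient_iso L H f"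
  using assms(6) unfolding lsa_iso_def
proof (elim exE conjE)
  fix f
  assume "bij_betw f (carrier L) (carrier (quot H (center H)))"
    "\<forall>a. \<forall>x\<in>carrier L. f (smul L a x) = smul (quot H (center H)) a (f x)"
    "\<forall>x\<in>carrier L. \<forall>y\<in>carrier L. f (brk L x y) = brk (quot H (center H)) (f x) (f y)"
    "f ` part0 L = part0 (quot H (center H))" "f ` part1 L = part1 (quot H (center H))"
  with assms(1-5) show thesis by (intro that) (unfold_locales, auto)
qed

context center_quotient_iso
begin

lemma lift_carrier:
  assumes "x \<in> carrier L"
  obtains x' where "x' \<in> carrier H" "f x = center_coset H x'"
proof -
  have "f x \<in> center_coset H ` carrier H"
    using assms bij unfolding bij_betw_def by (auto simp: quot_def)
  thus ?thesis using that by blast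
qed

lemma surj_carrier:
  assumes "w \<in> carrier H"
  obtains v where "v \<in> carrier L" "f v = center_coset H w"
proof -
  have "center_coset H w \<in> f ` carrier L"
    using assms bij unfolding bij_betw_def by (simp add: quot_def)
  thus ?thesis using that by blast
qed

lemma lift_part0:
  assumes "x \<in> part0 L"
  obtains x' where "x' \<in> part0 H" "f x = center_coset H x'"
proof -
  have "f x \<in> center_coset H ` part0 H" using assms f_part0 by (auto simp: quot_def)
  thus ?thesis using that by blast
qed

lemma lift_part1:
  assumes "x \<in> part1 L"
  obtains x' where "x' \<in> part1 H" "f x = center_coset H x'"
proof -
  have "f x \<in> center_coset H ` part1 H" using assms f_part1 by (auto simp: quot_def)
  thus ?thesis using that by blast
qed

lemma f_brk_lift:
  assumes "a \<in> carrier L" "b \<in> carrier L" "a' \<in> carrier H" "b' \<in> carrier H"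
    and "f a = center_coset H a'" "f b = center_coset H b'"
  shows "f (brk L a b) = center_coset H (brk H a' b')"
  using assms f_brk quot_center_brk[OF lsa_H] by simp

lemma f_smul_lift:
  assumes "a \<in> carrier L" "a' \<in> carrier H" "f a = center_coset H a'"
  shows "f (smul L t a) = center_coset H (smul H t a')"
  using assms f_smul quot_center_smul[OF lsa_H] by simp

lemma smul_lift_center:
  assumes "a \<in> carrier L" "a' \<in> carrier H" "f a = center_coset H a'"
    and "u \<in> carrier H" "f (smul L t a) = center_coset H u"
  obtains d where "d \<in> center H" "u = vadd H (smul H t a') d"
  using center_coset_eqD[OF lsa_H assms(4)] f_smul_lift[OF assms(1-3)] assms(5) by metis

lemma f_zero: "f (vzero L) = center H"
proof -
  obtain z' where z': "z' \<in> carrier H" "f (vzero L) = center_coset H z'"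
    using lift_carrier[OF vs_zero_closed[OF vector_space_L]] .
  have "f (vzero L) = f (smul L 0 (vzero L))"
    using vs_smul_zero_right[OF vector_space_L] by simp
  also have "\<dots> = center_coset H (smul H 0 z')"
    using f_smul_lift[OF vs_zero_closed[OF vector_space_L] z'] .
  finally show ?thesis
    using vs_smul_zero_left[OF lsa_vector_space[OF lsa_H] z'(1)] center_coset_zero[OF lsa_H] by simp
qed

lemma f_eq_center_iff:
  assumes "a \<in> carrier L"
  shows "f a = center H \<longleftrightarrow> a = vzero L"
  using assms f_zero bij vs_zero_closed[OF vector_space_L] unfolding bij_betw_def
  by (metis inj_onD)

lemma brk_lift_central:
  assumes "a \<in> carrier L" "b \<in> carrier L" "a' \<in> carrier H" "b' \<in> carrier H"
    and "f a = center_coset H a'" "f b = center_coset H b'" and "brk L a b = vzero L"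
  shows "brk H a' b' \<in> center H"
  using f_brk_lift[OF assms(1-6)] assms(7) f_zero
    center_coset_eq_center_iff[OF lsa_H lsa_brk_closed[OF lsa_H assms(3,4)]] by simp

lemma brk_eq_zero_of_two_pairs:
  assumes x1: "x1 \<in> part0 L" and y1: "y1 \<in> part1 L"
    and x2: "x2 \<in> part0 L" and y2: "y2 \<in> part1 L"
    and eq: "brk L x1 y1 = brk L x2 y2"
    and cross: "brk L y2 x1 = vzero L" "brk L x1 x2 = vzero L"
      "brk L y2 y1 = vzero L" "brk L y1 x2 = vzero L"
    and ad_y1: "\<And>v. v \<in> carrier L \<Longrightarrow> \<exists>a. brk L y1 v = smul L a (brk L x1 y1)"
    and ad_x1: "\<And>v. v \<in> carrier L \<Longrightarrow> \<exists>a. brk L v x1 = smul L a (brk L x1 y1)"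
  shows "brk L x1 y1 = vzero L"
proof -
  note H = lsa_H
  have c: "x1 \<in> carrier L" "y1 \<in> carrier L" "x2 \<in> carrier L" "y2 \<in> carrier L"
    using assms(1-4) part0_subset part1_subset by auto
  obtain x1' y1' x2' y2' where lifts: "x1' \<in> part0 H" "y1' \<in> part1 H" "x2' \<in> part0 H" "y2' \<in> part1 H"
    and f: "f x1 = center_coset H x1'" "f y1 = center_coset H y1'"
      "f x2 = center_coset H x2'" "f y2 = center_coset H y2'"
    using lift_part0[OF x1] lift_part1[OF y1] lift_part0[OF x2] lift_part1[OF y2] by metis
  have c': "x1' \<in> carrier H" "y1' \<in> carrier H" "x2' \<in> carrier H" "y2' \<in> carrier H"
    using lifts lsa_part0_carrier[OF H] lsa_part1_carrier[OF H] by auto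
  let ?z = "brk H x1' y1'"
  have zc: "?z \<in> carrier H" using lsa_brk_closed[OF H c'(1,2)] .
  have fz: "f (brk L x1 y1) = center_coset H ?z" using f_brk_lift[OF c(1,2) c'(1,2) f(1,2)] .
  obtain e where e: "e \<in> center H" "?z = vadd H (brk H x2' y2') e"
    using center_coset_eqD[OF H zc] fz eq f_brk_lift[OF c(3,4) c'(3,4) f(3,4)] by metis
  have "?z \<in> center H"
  proof (rule lsa_brk_central_of_adjoint_range[OF H lifts(1,2)])
    show "brk H x1' ?z = vzero H" "brk H y1' ?z = vzero H"
      using lsa_brk_brk_vanishes[OF H lifts e] brk_lift_central c c' f cross by simp_all
    show "\<exists>a. \<exists>d\<in>center H. brk H y1' w = vadd H (smul H a ?z) d" if w: "w \<in> carrier H" for w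
    proof -
      obtain v where v: "v \<in> carrier L" "f v = center_coset H w" using surj_carrier[OF w] .
      obtain a where "brk L y1 v = smul L a (brk L x1 y1)" using ad_y1[OF v(1)] ..
      with smul_lift_center[OF brk_closed[OF c(1,2)] zc fz lsa_brk_closed[OF H c'(2) w]]
        f_brk_lift[OF c(2) v(1) c'(2) w f(2) v(2)] show ?thesis by metis
    qed
    show "\<exists>a. \<exists>d\<in>center H. brk H w x1' = vadd H (smul H a ?z) d" if w: "w \<in> carrier H" for w
    proof -
      obtain v where v: "v \<in> carrier L" "f v = center_coset H w" using surj_carrier[OF w] .
      obtain a where "brk L v x1 = smul L a (brk L x1 y1)" using ad_x1[OF v(1)] ..
      with smul_lift_center[OF brk_closed[OF c(1,2)] zc fz lsa_brk_closed[OF H w c'(1)]]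
        f_brk_lift[OF v(1) c(1) w c'(1) v(2) f(1)] show ?thesis by metis
    qed
  qed
  thus ?thesis
    using fz f_eq_center_iff[OF brk_closed[OF c(1,2)]] center_coset_eq_center_iff[OF H zc] by simp
qed

end

section \<open>H_m \<oplus> A(r|s) is not capable for m \<ge> 2\<close>

lemma dsum_simps [simp]:
  "carrier (dsum L M) = carrier L \<times> carrier M"
  "part0 (dsum L M) = part0 L \<times> part0 M"
  "part1 (dsum L M) = part1 L \<times> part1 M"
  "vzero (dsum L M) = (vzero L, vzero M)"
  "vadd (dsum L M) (a1, a2) (b1, b2) = (vadd L a1 b1, vadd M a2 b2)"
  "smul (dsum L M) t (a1, a2) = (smul L t a1, smul M t a2)"
  "brk (dsum L M) (a1, a2) (b1, b2) = (brk L a1 b1, brk M a2 b2)"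
  by (simp_all add: dsum_def)

lemma heis_simps [simp]:
  "carrier (heis m) = {u. \<forall>i\<ge>2*m+1. u i = 0}"
  "part0 (heis m) = {u. \<forall>i\<ge>m. u i = 0}"
  "part1 (heis m) = {u. (\<forall>i<m. u i = 0) \<and> (\<forall>i\<ge>2*m+1. u i = 0)}"
  "vzero (heis m) = (\<lambda>i. 0)"
  "vadd (heis m) u v = (\<lambda>i. u i + v i)"
  "smul (heis m) t u = (\<lambda>i. t * u i)"
  by (simp_all add: heis_def)

lemma heis_brk:
  "brk (heis m) u v = (\<lambda>i. if i = 2*m then (\<Sum>j<m. u j * v (m+j) - u (m+j) * v j) else 0)"
  by (simp add: heis_def)

lemma abel_simps [simp]:
  "carrier (abel r s) = {u. \<forall>i\<ge>r+s. u i = 0}"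
  "part0 (abel r s) = {u. \<forall>i\<ge>r. u i = 0}"
  "part1 (abel r s) = {u. (\<forall>i<r. u i = 0) \<and> (\<forall>i\<ge>r+s. u i = 0)}"
  "vzero (abel r s) = (\<lambda>i. 0)"
  "vadd (abel r s) u v = (\<lambda>i. u i + v i)"
  "smul (abel r s) t u = (\<lambda>i. t * u i)"
  "brk (abel r s) u v = (\<lambda>i. 0)"
  by (simp_all add: abel_def)

lemma vector_space_on_dsum:
  assumes "vector_space_on L" "vector_space_on M"
  shows "vector_space_on (dsum L M)"
proof -
  have "\<exists>y\<in>carrier (dsum L M). vadd (dsum L M) x y = vzero (dsum L M)"
    if "x \<in> carrier (dsum L M)" for x
    using that vs_add_inverse[OF assms(1)] vs_add_inverse[OF assms(2)] by (cases x) force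
  with assms show ?thesis
    unfolding vector_space_on_def by (auto simp: dsum_def)
qed

lemma vector_space_on_heis: "vector_space_on (heis m :: ('f::field, _) lsa)"
proof -
  have "\<exists>y\<in>carrier (heis m). vadd (heis m) x y = vzero (heis m :: ('f, _) lsa)"
    if "x \<in> carrier (heis m)" for x
    using that by (intro bexI[of _ "\<lambda>i. - x i"]) auto
  thus ?thesis unfolding vector_space_on_def by (auto simp: algebra_simps)
qed

lemma vector_space_on_abel: "vector_space_on (abel r s :: ('f::field, _) lsa)"
proof -
  have "\<exists>y\<in>carrier (abel r s). vadd (abel r s) x y = vzero (abel r s :: ('f, _) lsa)"
    if "x \<in> carrier (abel r s)" for x
    using that by (intro bexI[of _ "\<lambda>i. - x i"]) auto
  thus ?thesis unfolding vector_space_on_def by (auto simp: algebra_simps)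
qed

definition unit_vec :: "nat \<Rightarrow> nat \<Rightarrow> 'f::field" where
  "unit_vec i = (\<lambda>k. if k = i then 1 else 0)"

lemma sum_unit_vec_mult:
  assumes "a < m"
  shows "(\<Sum>j<m. unit_vec a j * v j) = (v a :: 'f::field)"
proof -
  have "(\<Sum>j<m. unit_vec a j * v j) = (\<Sum>j<m. if j = a then v a else 0)"
    by (intro sum.cong) (auto simp: unit_vec_def)
  thus ?thesis using assms by simp
qed

lemma heis_brk_unit_vec_left:
  assumes "a < m"
  shows "brk (heis m) (unit_vec a) v = smul (heis m) (v (m+a)) (unit_vec (2*m) :: nat \<Rightarrow> 'f::field)"
proof -
  have "(\<Sum>j<m. unit_vec a j * v (m+j) - unit_vec a (m+j) * v j) = (\<Sum>j<m. unit_vec a j * v (m+j))"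
    using assms by (intro sum.cong) (auto simp: unit_vec_def)
  also have "\<dots> = v (m+a)" using sum_unit_vec_mult[OF assms] .
  finally show ?thesis by (simp add: heis_brk unit_vec_def fun_eq_iff)
qed

lemma heis_brk_unit_vec_odd_left:
  assumes "a < m"
  shows "brk (heis m) (unit_vec (m+a)) v = smul (heis m) (- v a) (unit_vec (2*m) :: nat \<Rightarrow> 'f::field)"
proof -
  have "(\<Sum>j<m. unit_vec (m+a) j * v (m+j) - unit_vec (m+a) (m+j) * v j)
      = (\<Sum>j<m. - (unit_vec a j * v j))"
    by (intro sum.cong) (auto simp: unit_vec_def)
  also have "\<dots> = - v a" using sum_unit_vec_mult[OF assms] by (simp add: sum_negf)
  finally show ?thesis by (simp add: heis_brk unit_vec_def fun_eq_iff)
qed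

lemma heis_brk_unit_vec_right:
  assumes "a < m"
  shows "brk (heis m) u (unit_vec a) = smul (heis m) (- u (m+a)) (unit_vec (2*m) :: nat \<Rightarrow> 'f::field)"
proof -
  have "(\<Sum>j<m. u j * unit_vec a (m+j) - u (m+j) * unit_vec a j) = (\<Sum>j<m. - (unit_vec a j * u (m+j)))"
    using assms by (intro sum.cong) (auto simp: unit_vec_def)
  also have "\<dots> = - u (m+a)" using sum_unit_vec_mult[OF assms] by (simp add: sum_negf)
  finally show ?thesis by (simp add: heis_brk unit_vec_def fun_eq_iff)
qed

lemma heis_dsum_iso_quot_centerE:
  fixes H :: "('f::field, 'h) lsa"
  assumes "lsa H" and "lsa_iso (dsum (heis m) (abel r s) :: ('f, _) lsa) (quot H (center H))"
  obtains f where "center_quotient_iso (dsum (heis m) (abel r s)) H f"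
proof -
  let ?L = "dsum (heis m) (abel r s) :: ('f, _) lsa"
  have "brk ?L x y \<in> carrier ?L" if "x \<in> carrier ?L" "y \<in> carrier ?L" for x y
    using that by (cases x, cases y) (auto simp: heis_brk)
  moreover have "part0 ?L \<subseteq> carrier ?L" "part1 ?L \<subseteq> carrier ?L" by auto
  ultimately show ?thesis
    using lsa_iso_quot_centerE[OF assms(1) vector_space_on_dsum[OF vector_space_on_heis vector_space_on_abel]]
      assms(2) that by blast
qed

lemma heis_dsum_not_capable:
  fixes H :: "('f::field, 'h) lsa"
  assumes m: "2 \<le> m" and H: "lsa H"
  shows "\<not> lsa_iso (dsum (heis m) (abel r s) :: ('f, _) lsa) (quot H (center H))"
proof
  let ?L = "dsum (heis m) (abel r s) :: ('f, _) lsa"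
  assume "lsa_iso ?L (quot H (center H))"
  then obtain f where "center_quotient_iso ?L H f" using heis_dsum_iso_quot_centerE[OF H] by blast
  then interpret center_quotient_iso ?L H f .
  let ?e = "\<lambda>i. (unit_vec i :: nat \<Rightarrow> 'f, vzero (abel r s))"
  let ?z = "?e (2*m)"
  have m0: "0 < m" and m1: "1 < m" using m by auto
  have brk_e: "brk ?L (?e a) (v, w) = smul ?L (v (m+a)) ?z"
    and brk_e_odd: "brk ?L (?e (m+a)) (v, w) = smul ?L (- v a) ?z"
    and brk_e_right: "brk ?L (v, w) (?e a) = smul ?L (- v (m+a)) ?z" if "a < m" for a v w
    using heis_brk_unit_vec_left[OF that] heis_brk_unit_vec_odd_left[OF that]
      heis_brk_unit_vec_right[OF that] by simp_all
  have z: "brk ?L (?e 0) (?e m) = ?z"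
    using brk_e[OF m0] by (simp add: unit_vec_def fun_eq_iff)
  have "brk ?L (?e 0) (?e m) = vzero ?L"
  proof (rule brk_eq_zero_of_two_pairs[of _ _ "?e 1" "?e (m+1)"])
    show "?e 0 \<in> part0 ?L" "?e m \<in> part1 ?L" "?e 1 \<in> part0 ?L" "?e (m+1) \<in> part1 ?L"
      using m by (auto simp: unit_vec_def)
    show "brk ?L (?e 0) (?e m) = brk ?L (?e 1) (?e (m+1))"
      using z brk_e[OF m1] by (simp add: unit_vec_def fun_eq_iff)
    show "brk ?L (?e (m+1)) (?e 0) = vzero ?L" "brk ?L (?e 0) (?e 1) = vzero ?L"
      "brk ?L (?e (m+1)) (?e m) = vzero ?L" "brk ?L (?e m) (?e 1) = vzero ?L"
      using m brk_e[OF m0] brk_e_odd[OF m1] brk_e_odd[OF m0, unfolded add_0_right]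
      by (simp_all add: unit_vec_def fun_eq_iff)
    show "\<exists>a. brk ?L (?e m) v = smul ?L a (brk ?L (?e 0) (?e m))" for v
      using brk_e_odd[OF m0, of "fst v" "snd v"] z by (metis add_0_right prod.collapse)
    show "\<exists>a. brk ?L v (?e 0) = smul ?L a (brk ?L (?e 0) (?e m))" for v
      using brk_e_right[OF m0, of "fst v" "snd v"] z by (metis prod.collapse)
  qed
  hence "(\<lambda>i. 0) = (unit_vec (2*m) :: nat \<Rightarrow> 'f)" using z by simp
  from fun_cong[OF this, of "2*m"] show False by (simp add: unit_vec_def)
qed

section \<open>A central extension with quotient H_1 \<oplus> A(r|s)\<close>

lemma lsa_iso_quot_centerI:
  fixes L :: "('f::field, 'v) lsa" and H :: "('f, 'h) lsa" and e :: "'v \<Rightarrow> 'h"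
  assumes H: "lsa H"
    and e_carrier: "\<And>a. a \<in> carrier L \<Longrightarrow> e a \<in> carrier H"
    and e_part0: "\<And>a. a \<in> part0 L \<Longrightarrow> e a \<in> part0 H"
    and e_part1: "\<And>a. a \<in> part1 L \<Longrightarrow> e a \<in> part1 H"
    and e_inj: "\<And>a b. a \<in> carrier L \<Longrightarrow> b \<in> carrier L \<Longrightarrow>
      center_coset H (e a) = center_coset H (e b) \<Longrightarrow> a = b"
    and e_surj: "\<And>h. h \<in> carrier H \<Longrightarrow> \<exists>a\<in>carrier L. center_coset H (e a) = center_coset H h"
    and e_surj0: "\<And>h. h \<in> part0 H \<Longrightarrow> \<exists>a\<in>part0 L. center_coset H (e a) = center_coset H h"
    and e_surj1: "\<And>h. h \<in> part1 H \<Longrightarrow> \<exists>a\<in>part1 L. center_coset H (e a) = center_coset H h"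
    and e_add: "\<And>a b. a \<in> carrier L \<Longrightarrow> b \<in> carrier L \<Longrightarrow>
      center_coset H (e (vadd L a b)) = center_coset H (vadd H (e a) (e b))"
    and e_smul: "\<And>t a. a \<in> carrier L \<Longrightarrow>
      center_coset H (e (smul L t a)) = center_coset H (smul H t (e a))"
    and e_brk: "\<And>a b. a \<in> carrier L \<Longrightarrow> b \<in> carrier L \<Longrightarrow>
      center_coset H (e (brk L a b)) = center_coset H (brk H (e a) (e b))"
  shows "lsa_iso L (quot H (center H))"
  unfolding lsa_iso_def
proof (intro exI[of _ "center_coset H \<circ> e"] conjI ballI allI)
  have image_eq: "(center_coset H \<circ> e) ` A = center_coset H ` B"
    if "\<And>a. a \<in> A \<Longrightarrow> e a \<in> B" and "\<And>h. h \<in> B \<Longrightarrow> \<exists>a\<in>A. center_coset H (e a) = center_coset H h"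
    for A B
  proof
    show "(center_coset H \<circ> e) ` A \<subseteq> center_coset H ` B" using that(1) by auto
    show "center_coset H ` B \<subseteq> (center_coset H \<circ> e) ` A"
    proof
      fix X assume "X \<in> center_coset H ` B"
      then obtain h where "h \<in> B" "X = center_coset H h" by blast
      with that(2) show "X \<in> (center_coset H \<circ> e) ` A" by (metis comp_apply image_eqI)
    qed
  qed
  show "bij_betw (center_coset H \<circ> e) (carrier L) (carrier (quot H (center H)))"
    unfolding bij_betw_def
  proof
    show "inj_on (center_coset H \<circ> e) (carrier L)" using e_inj by (auto intro: inj_onI)
    show "(center_coset H \<circ> e) ` carrier L = carrier (quot H (center H))"
      using image_eq[OF e_carrier e_surj] by (simp add: quot_def)
  qed
  show "(center_coset H \<circ> e) ` part0 L = part0 (quot H (center H))"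
    using image_eq[OF e_part0 e_surj0] by (simp add: quot_def)
  show "(center_coset H \<circ> e) ` part1 L = part1 (quot H (center H))"
    using image_eq[OF e_part1 e_surj1] by (simp add: quot_def)
  fix a b
  assume a: "a \<in> carrier L" and b: "b \<in> carrier L"
  show "(center_coset H \<circ> e) (vadd L a b)
      = vadd (quot H (center H)) ((center_coset H \<circ> e) a) ((center_coset H \<circ> e) b)"
    using e_add[OF a b] quot_center_add[OF H e_carrier[OF a] e_carrier[OF b]] by simp
  show "(center_coset H \<circ> e) (brk L a b)
      = brk (quot H (center H)) ((center_coset H \<circ> e) a) ((center_coset H \<circ> e) b)"
    using e_brk[OF a b] quot_center_brk[OF H e_carrier[OF a] e_carrier[OF b]] by simp
next
  fix t a
  assume a: "a \<in> carrier L"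
  show "(center_coset H \<circ> e) (smul L t a) = smul (quot H (center H)) t ((center_coset H \<circ> e) a)"
    using e_smul[OF a] quot_center_smul[OF H e_carrier[OF a]] by simp
qed

text \<open>A central extension of H_1 \<oplus> A(r|n-r). Coordinates: 0 is x (even), 1 is y and
  2 is z = [x,y] (odd), 3 is [x,z] (odd), 4+i is a_i for i < n (even iff i < r) and 4+n+i is
  [x,a_i], of the parity of a_i. The center is spanned by the coordinates 3 and 4+n+i, so
  dividing it out kills exactly the new brackets.\<close>

definition cover_even :: "nat \<Rightarrow> nat \<Rightarrow> nat \<Rightarrow> bool" where
  "cover_even r n k \<longleftrightarrow> k = 0 \<or> (4 \<le> k \<and> k < 4+r) \<or> (4+n \<le> k \<and> k < 4+n+r)"

definition cover_noncentral :: "nat \<Rightarrow> nat \<Rightarrow> bool" where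
  "cover_noncentral n k \<longleftrightarrow> k \<noteq> 3 \<and> (k < 4+n \<or> 4+2*n \<le> k)"

definition heis1_cover :: "nat \<Rightarrow> nat \<Rightarrow> ('f::field, nat \<Rightarrow> 'f) lsa" where
  "heis1_cover r n = \<lparr> carrier = {u. \<forall>k\<ge>4+2*n. u k = 0},
     vadd = (\<lambda>u v k. u k + v k),
     vzero = (\<lambda>k. 0),
     smul = (\<lambda>a u k. a * u k),
     brk = (\<lambda>u v k. if k = 2 then u 0 * v 1 - u 1 * v 0
                   else if k = 3 then u 0 * v 2 - u 2 * v 0
                   else if 4+n \<le> k \<and> k < 4+2*n then u 0 * v (k-n) - u (k-n) * v 0
                   else 0),
     part0 = {u. \<forall>k. \<not> cover_even r n k \<longrightarrow> u k = 0},
     part1 = {u. (\<forall>k. cover_even r n k \<longrightarrow> u k = 0) \<and> (\<forall>k\<ge>4+2*n. u k = 0)} \<rparr>"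

lemma heis1_cover_simps [simp]:
  "carrier (heis1_cover r n) = {u. \<forall>k\<ge>4+2*n. u k = 0}"
  "vadd (heis1_cover r n) u v = (\<lambda>k. u k + v k)"
  "vzero (heis1_cover r n) = (\<lambda>k. 0)"
  "smul (heis1_cover r n) a u = (\<lambda>k. a * u k)"
  "part0 (heis1_cover r n) = {u. \<forall>k. \<not> cover_even r n k \<longrightarrow> u k = 0}"
  "part1 (heis1_cover r n) = {u. (\<forall>k. cover_even r n k \<longrightarrow> u k = 0) \<and> (\<forall>k\<ge>4+2*n. u k = 0)}"
  by (simp_all add: heis1_cover_def)

lemma heis1_cover_brk:
  "brk (heis1_cover r n) u v = (\<lambda>k. if k = 2 then u 0 * v 1 - u 1 * v 0
                   else if k = 3 then u 0 * v 2 - u 2 * v 0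
                   else if 4+n \<le> k \<and> k < 4+2*n then u 0 * v (k-n) - u (k-n) * v 0
                   else 0)"
  by (simp add: heis1_cover_def)

lemma cover_even_simps: "cover_even r n 0" "\<not> cover_even r n (Suc 0)" "\<not> cover_even r n 2"
  "\<not> cover_even r n 3"
  by (simp_all add: cover_even_def)

lemma cover_even_shift: "r \<le> n \<Longrightarrow> 4+n \<le> k \<Longrightarrow> k < 4+2*n \<Longrightarrow> cover_even r n (k-n) = cover_even r n k"
  by (auto simp: cover_even_def)

lemma cover_even_bound: "r \<le> n \<Longrightarrow> 4+2*n \<le> k \<Longrightarrow> \<not> cover_even r n k"
  by (auto simp: cover_even_def)

lemma heis1_cover_lsa:
  assumes rn: "r \<le> n"
  shows "lsa (heis1_cover r n :: ('f::field, nat \<Rightarrow> 'f) lsa)"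
proof -
  let ?H = "heis1_cover r n :: ('f, nat \<Rightarrow> 'f) lsa"
  have vs: "vector_space_on ?H"
  proof -
    have "\<exists>y\<in>carrier ?H. vadd ?H x y = vzero ?H" if "x \<in> carrier ?H" for x
      using that by (intro bexI[of _ "\<lambda>i. - x i"]) auto
    thus ?thesis unfolding vector_space_on_def by (auto simp: algebra_simps)
  qed
  have subspaces: "subspace_of ?H (part0 ?H)" "subspace_of ?H (part1 ?H)"
    using cover_even_bound[OF rn] by (auto simp: subspace_of_def)
  have inter: "part0 ?H \<inter> part1 ?H = {vzero ?H}"
    by (auto simp: fun_eq_iff)
  have decompose: "\<exists>a\<in>part0 ?H. \<exists>b\<in>part1 ?H. x = vadd ?H a b" if "x \<in> carrier ?H" for x
    using that cover_even_bound[OF rn]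
    by (intro bexI[of _ "\<lambda>k. if cover_even r n k then x k else 0"]
        bexI[of _ "\<lambda>k. if cover_even r n k then 0 else x k"]) (auto simp: fun_eq_iff)
  have graded: "brk ?H x y \<in> part ?H ((i + j) mod 2)"
    if "i \<in> {0,1}" "j \<in> {0,1}" "x \<in> part ?H i" "y \<in> part ?H j" for i j x y
    using that cover_even_shift[OF rn] by (auto simp: part_def heis1_cover_brk cover_even_simps)
  have skew: "brk ?H x y = smul ?H (- ((-1) ^ (i * j))) (brk ?H y x)"
    if "i \<in> {0,1}" "j \<in> {0,1}" "x \<in> part ?H i" "y \<in> part ?H j" for i j x y
    using that by (auto simp: part_def heis1_cover_brk fun_eq_iff algebra_simps cover_even_simps)
  have closed: "brk ?H x y \<in> carrier ?H" if "x \<in> carrier ?H" "y \<in> carrier ?H" for x y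
    by (simp add: heis1_cover_brk)
  have additive: "brk ?H (vadd ?H x y) z = vadd ?H (brk ?H x z) (brk ?H y z)"
      "brk ?H x (vadd ?H y z) = vadd ?H (brk ?H x y) (brk ?H x z)" for x y z
    by (auto simp: heis1_cover_brk fun_eq_iff algebra_simps)
  have homogeneous: "brk ?H (smul ?H a x) y = smul ?H a (brk ?H x y)"
      "brk ?H x (smul ?H a y) = smul ?H a (brk ?H x y)" for a x y
    by (auto simp: heis1_cover_brk fun_eq_iff algebra_simps)
  have jacobi: "vadd ?H (vadd ?H (smul ?H ((-1) ^ (i * k)) (brk ?H x (brk ?H y z)))
                   (smul ?H ((-1) ^ (j * i)) (brk ?H y (brk ?H z x))))
             (smul ?H ((-1) ^ (k * j)) (brk ?H z (brk ?H x y))) = vzero ?H"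
    if "i \<in> {0,1}" "j \<in> {0,1}" "k \<in> {0,1}" "x \<in> part ?H i" "y \<in> part ?H j" "z \<in> part ?H k"
    for i j k x y z
  proof -
    \<comment> \<open>Only [x,[x,z]] survives among double brackets, so Jacobi reduces to a check on coordinate 3.\<close>
    have "brk ?H x (brk ?H y z) = (\<lambda>k. if k = 3 then x 0 * (y 0 * z 1 - y 1 * z 0) else 0)"
      for x y z
      by (auto simp: heis1_cover_brk fun_eq_iff)
    thus ?thesis using that by (auto simp: part_def fun_eq_iff algebra_simps cover_even_simps)
  qed
  show ?thesis
    unfolding lsa_def
    by (intro conjI ballI allI;
        rule vs subspaces inter decompose graded skew closed additive homogeneous jacobi; assumption)
qed

lemma heis1_cover_center:
  "center (heis1_cover r n :: ('f::field, nat \<Rightarrow> 'f) lsa)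
    = {c \<in> carrier (heis1_cover r n). \<forall>k. cover_noncentral n k \<longrightarrow> c k = 0}"
proof (intro set_eqI iffI)
  let ?H = "heis1_cover r n :: ('f, nat \<Rightarrow> 'f) lsa"
  fix c :: "nat \<Rightarrow> 'f"
  assume c: "c \<in> center ?H"
  have "unit_vec 0 \<in> carrier ?H" "unit_vec 1 \<in> carrier ?H" by (simp_all add: unit_vec_def)
  hence b0: "brk ?H c (unit_vec 0) = (\<lambda>k. 0)" and b1: "brk ?H c (unit_vec 1) = (\<lambda>k. 0)"
    using c by (simp_all add: center_def)
  have "c k = 0" if "cover_noncentral n k" for k
  proof -
    from that consider "k = 0" | "k = 1" | "k = 2" | "4 \<le> k" "k < 4+n" | "4+2*n \<le> k"
      unfolding cover_noncentral_def by linarith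
    thus ?thesis
    proof cases
      case 1 thus ?thesis using fun_cong[OF b1, of 2] by (simp add: heis1_cover_brk unit_vec_def)
    next
      case 2 thus ?thesis using fun_cong[OF b0, of 2] by (simp add: heis1_cover_brk unit_vec_def)
    next
      case 3 thus ?thesis using fun_cong[OF b0, of 3] by (simp add: heis1_cover_brk unit_vec_def)
    next
      case 4 thus ?thesis using fun_cong[OF b0, of "k+n"] by (simp add: heis1_cover_brk unit_vec_def)
    next
      case 5 thus ?thesis using c by (simp add: center_def)
    qed
  qed
  thus "c \<in> {c \<in> carrier ?H. \<forall>k. cover_noncentral n k \<longrightarrow> c k = 0}"
    using c by (simp add: center_def)
next
  let ?H = "heis1_cover r n :: ('f, nat \<Rightarrow> 'f) lsa"
  fix c :: "nat \<Rightarrow> 'f"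
  assume c: "c \<in> {c \<in> carrier ?H. \<forall>k. cover_noncentral n k \<longrightarrow> c k = 0}"
  have "c 0 = 0" "c 1 = 0" "c 2 = 0" using c by (auto simp: cover_noncentral_def)
  moreover have "c (k-n) = 0" if "4+n \<le> k" "k < 4+2*n" for k
  proof -
    have "cover_noncentral n (k-n)" using that unfolding cover_noncentral_def by linarith
    thus ?thesis using c by blast
  qed
  ultimately have "brk ?H c x = vzero ?H" for x by (auto simp: heis1_cover_brk fun_eq_iff)
  thus "c \<in> center ?H" using c by (simp add: center_def)
qed

lemma heis1_cover_center_coset_eq_iff:
  assumes rn: "r \<le> n"
    and u: "u \<in> carrier (heis1_cover r n :: ('f::field, nat \<Rightarrow> 'f) lsa)"
    and v: "v \<in> carrier (heis1_cover r n :: ('f, nat \<Rightarrow> 'f) lsa)"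
  shows "center_coset (heis1_cover r n) u = center_coset (heis1_cover r n) v
    \<longleftrightarrow> (\<forall>k. cover_noncentral n k \<longrightarrow> u k = v k)"
proof
  assume "center_coset (heis1_cover r n) u = center_coset (heis1_cover r n) v"
  then obtain c where "c \<in> center (heis1_cover r n)" "u = vadd (heis1_cover r n) v c"
    using center_coset_eqD[OF heis1_cover_lsa[OF rn] u] by metis
  thus "\<forall>k. cover_noncentral n k \<longrightarrow> u k = v k" by (simp add: heis1_cover_center)
next
  assume agree: "\<forall>k. cover_noncentral n k \<longrightarrow> u k = v k"
  define c where "c = (\<lambda>k. u k - v k)"
  have "c \<in> center (heis1_cover r n)" using u v agree by (simp add: heis1_cover_center c_def)
  moreover have "u = vadd (heis1_cover r n) v c" by (simp add: c_def)
  ultimately show "center_coset (heis1_cover r n) u = center_coset (heis1_cover r n) v"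
    using center_coset_add_center[OF heis1_cover_lsa[OF rn] v] by simp
qed

definition cover_emb :: "nat \<Rightarrow> (nat \<Rightarrow> 'f) \<times> (nat \<Rightarrow> 'f) \<Rightarrow> nat \<Rightarrow> 'f::field" where
  "cover_emb n a = (\<lambda>k. if k < 3 then fst a k else if 4 \<le> k \<and> k < 4+n then snd a (k-4) else 0)"

definition cover_proj :: "nat \<Rightarrow> (nat \<Rightarrow> 'f::field) \<Rightarrow> (nat \<Rightarrow> 'f) \<times> (nat \<Rightarrow> 'f)" where
  "cover_proj n h = (\<lambda>k. if k < 3 then h k else 0, \<lambda>i. if i < n then h (4+i) else 0)"

lemma cover_emb_carrier: "cover_emb n a \<in> carrier (heis1_cover r n)"
  by (simp add: cover_emb_def)

lemma cover_emb_mem: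
  "a \<in> part0 (dsum (heis 1) (abel r s)) \<Longrightarrow> cover_emb (r+s) a \<in> part0 (heis1_cover r (r+s))"
  "a \<in> part1 (dsum (heis 1) (abel r s)) \<Longrightarrow> cover_emb (r+s) a \<in> part1 (heis1_cover r (r+s))"
  by (cases a; auto simp: cover_emb_def cover_even_def)+

lemma cover_proj_mem:
  "h \<in> carrier (heis1_cover r (r+s)) \<Longrightarrow> cover_proj (r+s) h \<in> carrier (dsum (heis 1) (abel r s))"
  "h \<in> part0 (heis1_cover r (r+s)) \<Longrightarrow> cover_proj (r+s) h \<in> part0 (dsum (heis 1) (abel r s))"
  "h \<in> part1 (heis1_cover r (r+s)) \<Longrightarrow> cover_proj (r+s) h \<in> part1 (dsum (heis 1) (abel r s))"
  by (auto simp: cover_proj_def cover_even_def)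

lemma cover_emb_proj: "cover_noncentral n k \<Longrightarrow> h \<in> carrier (heis1_cover r n) \<Longrightarrow>
    cover_emb n (cover_proj n h) k = (h k :: 'f::field)"
  by (auto simp: cover_emb_def cover_proj_def cover_noncentral_def)

lemma cover_emb_add: "cover_emb n (vadd (dsum (heis 1) (abel r s)) a b)
    = (\<lambda>k. cover_emb n a k + cover_emb n b k :: 'f::field)"
  by (cases a, cases b) (simp add: cover_emb_def fun_eq_iff)

lemma cover_emb_smul: "cover_emb n (smul (dsum (heis 1) (abel r s)) t a)
    = (\<lambda>k. t * cover_emb n a k :: 'f::field)"
  by (cases a) (simp add: cover_emb_def fun_eq_iff)

lemma cover_emb_brk: "cover_noncentral n k \<Longrightarrow>
    cover_emb n (brk (dsum (heis 1) (abel r s)) a b) k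
    = brk (heis1_cover r n) (cover_emb n a) (cover_emb n b :: nat \<Rightarrow> 'f::field) k"
  by (cases a, cases b) (auto simp: cover_emb_def heis_brk heis1_cover_brk cover_noncentral_def)

lemma cover_emb_inj:
  assumes a: "a \<in> carrier (dsum (heis 1) (abel r s) :: ('f::field, _) lsa)"
    and b: "b \<in> carrier (dsum (heis 1) (abel r s) :: ('f, _) lsa)"
    and agree: "\<forall>k. cover_noncentral (r+s) k \<longrightarrow> cover_emb (r+s) a k = cover_emb (r+s) b k"
  shows "a = b"
proof -
  obtain a1 a2 b1 b2 where ab: "a = (a1, a2)" "b = (b1, b2)" by fastforce
  have "a1 i = b1 i" for i
  proof (cases "i < 3")
    case True
    thus ?thesis using agree[rule_format, of i] ab by (simp add: cover_emb_def cover_noncentral_def)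
  qed (use a b ab in simp)
  moreover have "a2 i = b2 i" for i
  proof (cases "i < r+s")
    case True
    thus ?thesis using agree[rule_format, of "4+i"] ab by (simp add: cover_emb_def cover_noncentral_def)
  qed (use a b ab in simp)
  ultimately show ?thesis using ab by (simp add: fun_eq_iff)
qed

lemma heis1_dsum_capable:
  "capable_via (dsum (heis 1) (abel r s) :: ('f::field, _) lsa) (heis1_cover r (r+s))"
proof -
  let ?H = "heis1_cover r (r+s) :: ('f, nat \<Rightarrow> 'f) lsa"
  let ?e = "cover_emb (r+s) :: _ \<Rightarrow> nat \<Rightarrow> 'f"
  have H: "lsa ?H" using heis1_cover_lsa[of r "r+s"] by simp
  note coset_eq = heis1_cover_center_coset_eq_iff[of r "r+s", OF le_add1]
  have surj: "\<exists>a\<in>P. center_coset ?H (?e a) = center_coset ?H h"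
    if "h \<in> carrier ?H" "cover_proj (r+s) h \<in> P" for h P
    using that coset_eq[OF cover_emb_carrier that(1)] cover_emb_proj by blast
  have "lsa_iso (dsum (heis 1) (abel r s)) (quot ?H (center ?H))"
  proof (rule lsa_iso_quot_centerI[OF H, of _ ?e])
    show "?e a \<in> carrier ?H" if "a \<in> carrier (dsum (heis 1) (abel r s))" for a
      using cover_emb_carrier .
    show "?e a \<in> part0 ?H" if "a \<in> part0 (dsum (heis 1) (abel r s))" for a
      using cover_emb_mem(1)[OF that] .
    show "?e a \<in> part1 ?H" if "a \<in> part1 (dsum (heis 1) (abel r s))" for a
      using cover_emb_mem(2)[OF that] .
    show "a = b" if "a \<in> carrier (dsum (heis 1) (abel r s))" "b \<in> carrier (dsum (heis 1) (abel r s))"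
      "center_coset ?H (?e a) = center_coset ?H (?e b)" for a b
      using that cover_emb_inj coset_eq[OF cover_emb_carrier cover_emb_carrier] by blast
    show "\<exists>a\<in>carrier (dsum (heis 1) (abel r s)). center_coset ?H (?e a) = center_coset ?H h"
      if "h \<in> carrier ?H" for h
      using surj[OF that cover_proj_mem(1)[OF that]] .
    show "\<exists>a\<in>part0 (dsum (heis 1) (abel r s)). center_coset ?H (?e a) = center_coset ?H h"
      if "h \<in> part0 ?H" for h
      using surj[OF lsa_part0_carrier[OF H that] cover_proj_mem(2)[OF that]] .
    show "\<exists>a\<in>part1 (dsum (heis 1) (abel r s)). center_coset ?H (?e a) = center_coset ?H h"
      if "h \<in> part1 ?H" for h
      using surj[OF lsa_part1_carrier[OF H that] cover_proj_mem(3)[OF that]] .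
    show "center_coset ?H (?e (vadd (dsum (heis 1) (abel r s)) a b))
        = center_coset ?H (vadd ?H (?e a) (?e b))" for a b
      unfolding cover_emb_add by simp
    show "center_coset ?H (?e (smul (dsum (heis 1) (abel r s)) t a))
        = center_coset ?H (smul ?H t (?e a))" for t a
      unfolding cover_emb_smul by simp
    show "center_coset ?H (?e (brk (dsum (heis 1) (abel r s)) a b))
        = center_coset ?H (brk ?H (?e a) (?e b))"
      for a b
      using coset_eq[OF cover_emb_carrier lsa_brk_closed[OF H cover_emb_carrier cover_emb_carrier]]
        cover_emb_brk by blast
  qed
  thus ?thesis unfolding capable_via_def using H by simp
qed

theorem mainTheorem6:
  fixes m r s :: nat
  assumes "(2::'f::field) \<noteq> 0" and "(3::'f) \<noteq> 0"
    and "m \<ge> 1" and "r + s \<ge> 1"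
  shows "((\<exists>H :: ('f, 'h) lsa. capable_via (dsum (heis m) (abel r s) :: ('f, _) lsa) H) \<longrightarrow> m = 1)
       \<and> (m = 1 \<longrightarrow> (\<exists>H :: ('f, nat \<Rightarrow> 'f) lsa. capable_via (dsum (heis m) (abel r s) :: ('f, _) lsa) H))"
proof (intro conjI impI)
  assume "\<exists>H :: ('f, 'h) lsa. capable_via (dsum (heis m) (abel r s) :: ('f, _) lsa) H"
  then obtain H :: "('f, 'h) lsa"
    where "lsa H" "lsa_iso (dsum (heis m) (abel r s) :: ('f, _) lsa) (quot H (center H))"
    unfolding capable_via_def by blast
  hence "\<not> 2 \<le> m" using heis_dsum_not_capable by blast
  thus "m = 1" using \<open>m \<ge> 1\<close> by simp
next
  assume "m = 1"
  thus "\<exists>H :: ('f, nat \<Rightarrow> 'f) lsa. capable_via (dsum (heis m) (abel r s) :: ('f, _) lsa) H"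
    using heis1_dsum_capable by blast
qed

end
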